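(* Let $\Gamma$ be a cofinite graph and let $\overline{\Gamma}$ denote its (Hausdorff uniform) completion, which is again a cofinite graph. The following statements are equivalent: (1) $\Gamma$ is cofinitely connected; (2) $\Gamma$ is not the uniform sum of two disjoint nonempty subgraphs; (3) $\overline{\Gamma}$ is cofinitely connected.
   Context: A graph $\Gamma$ is a set $\Gamma=V(\Gamma)\sqcup E(\Gamma)$ (vertices and edges) together with maps $s,t\colon E(\Gamma)\to V(\Gamma)$ and an involution $e\mapsto\overline e$ of $E(\Gamma)$ without fixed points such that $s(\overline e)=t(e)$ and $t(\overline e)=s(e)$. A subgraph is a subset closed under $s$, $t$ and $e\mapsto \overline e$. An equivalence relation $R$ on a graph $\Gamma$ is compatible if $R\subseteq (V(\Gamma)\times V(\Gamma))\cup(E(\Gamma)\times E(\Gamma))$, $(e,e')\in R$ implies $(s(e),s(e')),(t(e),t(e')),(\overline e,\overline{e'})\in R$, and $(e,\overline e)\notin R$ for every edge $e$; then the quotient $\Gamma/R$ is a graph. A cofinite entourage of a uniform space is an entourage that is an equivalence relation with finitely many equivalence classes. A cofinite graph is a graph equipped with a Hausdorff uniform structure in which the compatible cofinite entourages form a fundamental system of entourages. A path in a graph is a finite sequence of edges $e_1\cdots e_n$ with $t(e_i)=s(e_{i+1})$; a graph is path connected if any two vertices are joined by a path. A cofinite graph $\Gamma$ is cofinitely connected if $\Gamma/R$ is path connected for every compatible cofinite entourage $R$ of $\Gamma$. $\Gamma$ is the uniform sum of two disjoint subgraphs $\Gamma_1,\Gamma_2$ if $\Gamma=\Gamma_1\cup\Gamma_2$,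 $\Gamma_1\cap\Gamma_2=\emptyset$, and a subset $W\subseteq\Gamma\times\Gamma$ is an entourage of $\Gamma$ iff $W\supseteq W_1\cup W_2$ for some entourages $W_i$ of $\Gamma_i$ (with the subspace uniformities). *)

theory Defs
  imports Main
begin

record 'a graph =
  gverts :: "'a set"
  gedges :: "'a set"
  gsrc   :: "'a \<Rightarrow> 'a"
  gtgt   :: "'a \<Rightarrow> 'a"
  gbar   :: "'a \<Rightarrow> 'a"

record 'a ugraph = "'a graph" +
  gunif :: "('a \<times> 'a) set set"

definition gcarrier :: "('a, 'm) graph_scheme \<Rightarrow> 'a set" where
  "gcarrier G = gverts G \<union> gedges G"

definition is_graph :: "('a, 'm) graph_scheme \<Rightarrow> bool" where
  "is_graph G \<longleftrightarrow> gverts G \<inter> gedges G = {} \<and>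
     (\<forall>e\<in>gedges G. gsrc G e \<in> gverts G \<and> gtgt G e \<in> gverts G \<and>
        gbar G e \<in> gedges G \<and> gbar G e \<noteq> e \<and> gbar G (gbar G e) = e \<and>
        gsrc G (gbar G e) = gtgt G e \<and> gtgt G (gbar G e) = gsrc G e)"

definition path_between :: "('a, 'm) graph_scheme \<Rightarrow> 'a \<Rightarrow> 'a \<Rightarrow> 'a list \<Rightarrow> bool" where
  "path_between G u w es \<longleftrightarrow>
     (es = [] \<and> u = w) \<or>
     (es \<noteq> [] \<and> set es \<subseteq> gedges G \<and> gsrc G (hd es) = u \<and> gtgt G (last es) = w \<and>
      (\<forall>i. Suc i < length es \<longrightarrow> gtgt G (es ! i) = gsrc G (es ! Suc i)))"

definition path_connected_graph :: "('a, 'm) graph_scheme \<Rightarrow> bool" where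
  "path_connected_graph G \<longleftrightarrow>
     (\<forall>u\<in>gverts G. \<forall>w\<in>gverts G. \<exists>es. path_between G u w es)"

definition uniformity_on :: "'a set \<Rightarrow> ('a \<times> 'a) set set \<Rightarrow> bool" where
  "uniformity_on X U \<longleftrightarrow> U \<noteq> {} \<and>
     (\<forall>W\<in>U. W \<subseteq> X \<times> X \<and> Id_on X \<subseteq> W \<and> W\<inverse> \<in> U \<and> (\<exists>V\<in>U. V O V \<subseteq> W)) \<and>
     (\<forall>W1\<in>U. \<forall>W2\<in>U. W1 \<inter> W2 \<in> U) \<and>
     (\<forall>W\<in>U. \<forall>W'. W \<subseteq> W' \<and> W' \<subseteq> X \<times> X \<longrightarrow> W' \<in> U)"

definition hausdorff_unif :: "'a set \<Rightarrow> ('a \<times> 'a) set set \<Rightarrow> bool" where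
  "hausdorff_unif X U \<longleftrightarrow> \<Inter>U = Id_on X"

definition subspace_unif :: "('a \<times> 'a) set set \<Rightarrow> 'a set \<Rightarrow> ('a \<times> 'a) set set" where
  "subspace_unif U A = {W \<inter> (A \<times> A) | W. W \<in> U}"

definition cauchy_filter :: "'a set \<Rightarrow> ('a \<times> 'a) set set \<Rightarrow> 'a filter \<Rightarrow> bool" where
  "cauchy_filter X U F \<longleftrightarrow> F \<noteq> bot \<and> F \<le> principal X \<and>
     (\<forall>W\<in>U. eventually (\<lambda>p. p \<in> W) (F \<times>\<^sub>F F))"

text \<open>A filter converges to x iff it contains every neighbourhood W[x] of x.\<close>
definition complete_unif :: "'a set \<Rightarrow> ('a \<times> 'a) set set \<Rightarrow> bool" where
  "complete_unif X U \<longleftrightarrow>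
     (\<forall>F. cauchy_filter X U F \<longrightarrow> (\<exists>x\<in>X. \<forall>W\<in>U. eventually (\<lambda>y. (x, y) \<in> W) F))"

definition compatible_rel :: "('a, 'm) graph_scheme \<Rightarrow> ('a \<times> 'a) set \<Rightarrow> bool" where
  "compatible_rel G R \<longleftrightarrow>
     R \<subseteq> (gverts G \<times> gverts G) \<union> (gedges G \<times> gedges G) \<and>
     (\<forall>(e, e')\<in>R. e \<in> gedges G \<longrightarrow>
        (gsrc G e, gsrc G e') \<in> R \<and> (gtgt G e, gtgt G e') \<in> R \<and> (gbar G e, gbar G e') \<in> R) \<and>
     (\<forall>e\<in>gedges G. (e, gbar G e) \<notin> R)"

definition compatible_equiv :: "('a, 'm) graph_scheme \<Rightarrow> ('a \<times> 'a) set \<Rightarrow> bool" where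
  "compatible_equiv G R \<longleftrightarrow> equiv (gcarrier G) R \<and> compatible_rel G R"

definition cofinite_entourage :: "'a ugraph \<Rightarrow> ('a \<times> 'a) set \<Rightarrow> bool" where
  "cofinite_entourage G R \<longleftrightarrow>
     R \<in> gunif G \<and> equiv (gcarrier G) R \<and> finite (gcarrier G // R)"

definition cofinite_graph :: "'a ugraph \<Rightarrow> bool" where
  "cofinite_graph G \<longleftrightarrow> is_graph G \<and> uniformity_on (gcarrier G) (gunif G) \<and>
     hausdorff_unif (gcarrier G) (gunif G) \<and>
     (\<forall>W\<in>gunif G. \<exists>R. compatible_equiv G R \<and> cofinite_entourage G R \<and> R \<subseteq> W)"

definition quotient_graph :: "('a, 'm) graph_scheme \<Rightarrow> ('a \<times> 'a) set \<Rightarrow> 'a set graph" where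
  "quotient_graph G R =
     \<lparr> gverts = gverts G // R, gedges = gedges G // R,
       gsrc = (\<lambda>C. R `` (gsrc G ` C)), gtgt = (\<lambda>C. R `` (gtgt G ` C)),
       gbar = (\<lambda>C. R `` (gbar G ` C)) \<rparr>"

definition cofinitely_connected :: "'a ugraph \<Rightarrow> bool" where
  "cofinitely_connected G \<longleftrightarrow>
     (\<forall>R. compatible_equiv G R \<and> cofinite_entourage G R \<longrightarrow>
        path_connected_graph (quotient_graph G R))"

definition is_subgraph :: "('a, 'm) graph_scheme \<Rightarrow> 'a set \<Rightarrow> bool" where
  "is_subgraph G S \<longleftrightarrow> S \<subseteq> gcarrier G \<and>
     (\<forall>e\<in>S \<inter> gedges G. gsrc G e \<in> S \<and> gtgt G e \<in> S \<and> gbar G e \<in> S)"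

definition uniform_sum :: "'a ugraph \<Rightarrow> 'a set \<Rightarrow> 'a set \<Rightarrow> bool" where
  "uniform_sum G S1 S2 \<longleftrightarrow> is_subgraph G S1 \<and> is_subgraph G S2 \<and>
     S1 \<union> S2 = gcarrier G \<and> S1 \<inter> S2 = {} \<and>
     (\<forall>W. W \<subseteq> gcarrier G \<times> gcarrier G \<longrightarrow>
        (W \<in> gunif G \<longleftrightarrow>
          (\<exists>W1\<in>subspace_unif (gunif G) S1. \<exists>W2\<in>subspace_unif (gunif G) S2. W1 \<union> W2 \<subseteq> W)))"

text \<open>Completions are unique up to isomorphism.\<close>
definition is_completion :: "'a ugraph \<Rightarrow> 'b ugraph \<Rightarrow> ('a \<Rightarrow> 'b) \<Rightarrow> bool" where
  "is_completion G H \<phi> \<longleftrightarrow> cofinite_graph H \<and>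
     \<phi> ` gverts G \<subseteq> gverts H \<and> \<phi> ` gedges G \<subseteq> gedges H \<and>
     (\<forall>e\<in>gedges G. \<phi> (gsrc G e) = gsrc H (\<phi> e) \<and> \<phi> (gtgt G e) = gtgt H (\<phi> e) \<and>
        \<phi> (gbar G e) = gbar H (\<phi> e)) \<and>
     inj_on \<phi> (gcarrier G) \<and>
     gunif G = {map_prod \<phi> \<phi> -` W \<inter> (gcarrier G \<times> gcarrier G) | W. W \<in> gunif H} \<and>
     (\<forall>y\<in>gcarrier H. \<forall>W\<in>gunif H. \<exists>x\<in>gcarrier G. (y, \<phi> x) \<in> W) \<and>
     complete_unif (gcarrier H) (gunif H)"

end

theory Submission
  imports Defs
begin

text \<open>All three conditions are equivalent to the absence of a separation: a partition of the
  graph into nonempty subgraphs \<open>S\<^sub>1, S\<^sub>2\<close> such that \<open>S\<^sub>1 \<times> S\<^sub>1 \<union> S\<^sub>2 \<times> S\<^sub>2\<close> is an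
  entourage; with nonempty parts this is exactly a uniform sum.
  If the quotient by a compatible cofinite entourage \<open>R\<close> is not path connected, the vertices
  whose class can reach a fixed class, together with the edges leaving them, form an
  \<open>R\<close>-saturated subgraph with a subgraph as complement, so these blocks contain \<open>R\<close>.
  Conversely, if \<open>R\<close> lies inside the blocks of a separation, every edge of the quotient stays
  within one block and no path crosses.
  Separations of the completion pull back along the dense embedding \<open>\<phi>\<close>. A separation of
  \<open>\<Gamma>\<close> is the trace of an entourage \<open>W\<close> of the completion; saturating \<open>\<phi>(S\<^sub>1)\<close> and
  \<open>\<phi>(S\<^sub>2)\<close> under a compatible cofinite \<open>R \<subseteq> W\<close> separates the completion.\<close>

definition separation :: "'a ugraph \<Rightarrow> 'a set \<Rightarrow> 'a set \<Rightarrow> bool" where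
  "separation G S1 S2 \<longleftrightarrow> is_subgraph G S1 \<and> is_subgraph G S2 \<and>
     S1 \<union> S2 = gcarrier G \<and> S1 \<inter> S2 = {} \<and> S1 \<noteq> {} \<and> S2 \<noteq> {} \<and>
     S1 \<times> S1 \<union> S2 \<times> S2 \<in> gunif G"

lemma uniformity_on_mono:
  assumes "uniformity_on X U" "W \<in> U" "W \<subseteq> W'" "W' \<subseteq> X \<times> X"
  shows "W' \<in> U"
  using assms unfolding uniformity_on_def by (metis (no_types, lifting))

lemma uniformity_on_Int:
  assumes "uniformity_on X U" "W \<in> U" "W' \<in> U"
  shows "W \<inter> W' \<in> U"
  using assms unfolding uniformity_on_def by (metis (no_types, lifting))

lemma uniformity_on_top:
  assumes "uniformity_on X U"
  shows "X \<times> X \<in> U"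
proof -
  obtain W where "W \<in> U" "W \<subseteq> X \<times> X"
    using assms unfolding uniformity_on_def by (metis (no_types, lifting) ex_in_conv)
  then show ?thesis using uniformity_on_mono[OF assms] by blast
qed

lemma separation_imp_uniform_sum:
  assumes U: "uniformity_on (gcarrier G) (gunif G)" and sep: "separation G S1 S2"
  shows "uniform_sum G S1 S2"
  unfolding uniform_sum_def
proof (intro conjI allI impI)
  show "is_subgraph G S1" "is_subgraph G S2" "S1 \<union> S2 = gcarrier G" "S1 \<inter> S2 = {}"
    using sep unfolding separation_def by blast+
  fix W assume W: "W \<subseteq> gcarrier G \<times> gcarrier G"
  show "W \<in> gunif G \<longleftrightarrow>
    (\<exists>W1\<in>subspace_unif (gunif G) S1. \<exists>W2\<in>subspace_unif (gunif G) S2. W1 \<union> W2 \<subseteq> W)"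
  proof
    assume "W \<in> gunif G"
    then have "W \<inter> (S1 \<times> S1) \<in> subspace_unif (gunif G) S1" "W \<inter> (S2 \<times> S2) \<in> subspace_unif (gunif G) S2"
      unfolding subspace_unif_def by auto
    then show "\<exists>W1\<in>subspace_unif (gunif G) S1. \<exists>W2\<in>subspace_unif (gunif G) S2. W1 \<union> W2 \<subseteq> W"
      by (meson Int_lower1 Un_least)
  next
    assume "\<exists>W1\<in>subspace_unif (gunif G) S1. \<exists>W2\<in>subspace_unif (gunif G) S2. W1 \<union> W2 \<subseteq> W"
    then obtain V1 V2 where V: "V1 \<in> gunif G" "V2 \<in> gunif G"
        "V1 \<inter> (S1 \<times> S1) \<union> V2 \<inter> (S2 \<times> S2) \<subseteq> W"
      unfolding subspace_unif_def by auto
    have "S1 \<times> S1 \<union> S2 \<times> S2 \<in> gunif G"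
      using sep unfolding separation_def by blast
    then have "V1 \<inter> V2 \<inter> (S1 \<times> S1 \<union> S2 \<times> S2) \<in> gunif G"
      using uniformity_on_Int[OF U uniformity_on_Int[OF U V(1,2)]] by blast
    moreover have "V1 \<inter> V2 \<inter> (S1 \<times> S1 \<union> S2 \<times> S2) \<subseteq> W"
      using V(3) by blast
    ultimately show "W \<in> gunif G"
      by (rule uniformity_on_mono[OF U _ _ W])
  qed
qed

lemma uniform_sumD:
  assumes "uniform_sum G S1 S2"
  shows "is_subgraph G S1" "is_subgraph G S2" "S1 \<union> S2 = gcarrier G" "S1 \<inter> S2 = {}"
    and "\<And>W1 W2. W1 \<in> subspace_unif (gunif G) S1 \<Longrightarrow> W2 \<in> subspace_unif (gunif G) S2 \<Longrightarrow>
      W1 \<union> W2 \<in> gunif G"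
proof -
  show "is_subgraph G S1" "is_subgraph G S2" "S1 \<union> S2 = gcarrier G" "S1 \<inter> S2 = {}"
    using assms unfolding uniform_sum_def by simp_all
  fix W1 W2
  assume "W1 \<in> subspace_unif (gunif G) S1" "W2 \<in> subspace_unif (gunif G) S2"
  moreover from this have "W1 \<union> W2 \<subseteq> gcarrier G \<times> gcarrier G"
    using \<open>S1 \<union> S2 = gcarrier G\<close> unfolding subspace_unif_def by blast
  ultimately show "W1 \<union> W2 \<in> gunif G"
    using assms unfolding uniform_sum_def by (meson order_refl)
qed

lemma nonempty_uniform_sum_iff_separation:
  assumes U: "uniformity_on (gcarrier G) (gunif G)"
  shows "S1 \<noteq> {} \<and> S2 \<noteq> {} \<and> uniform_sum G S1 S2 \<longleftrightarrow> separation G S1 S2"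
proof
  assume nonempty_sum: "S1 \<noteq> {} \<and> S2 \<noteq> {} \<and> uniform_sum G S1 S2"
  note sum = uniform_sumD[OF nonempty_sum[THEN conjunct2, THEN conjunct2]]
  have block: "S \<times> S \<in> subspace_unif (gunif G) S" if "S \<subseteq> gcarrier G" for S
  proof -
    have "S \<times> S = gcarrier G \<times> gcarrier G \<inter> S \<times> S" using that by blast
    then show ?thesis using uniformity_on_top[OF U] unfolding subspace_unif_def by blast
  qed
  have "S1 \<times> S1 \<union> S2 \<times> S2 \<in> gunif G"
    using sum(3) by (intro sum(5) block) blast+
  then show "separation G S1 S2"
    using nonempty_sum sum(1-4) unfolding separation_def by blast
next
  assume "separation G S1 S2"
  then show "S1 \<noteq> {} \<and> S2 \<noteq> {} \<and> uniform_sum G S1 S2"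
    using separation_imp_uniform_sum[OF U] unfolding separation_def by blast
qed

lemma separation_if_refines:
  assumes U: "uniformity_on (gcarrier G) (gunif G)" and R: "R \<in> gunif G"
    and refines: "R \<subseteq> S1 \<times> S1 \<union> S2 \<times> S2"
    and "is_subgraph G S1" "is_subgraph G S2" "S1 \<union> S2 = gcarrier G" "S1 \<inter> S2 = {}"
    and "S1 \<noteq> {}" "S2 \<noteq> {}"
  shows "separation G S1 S2"
proof -
  have "S1 \<times> S1 \<union> S2 \<times> S2 \<subseteq> gcarrier G \<times> gcarrier G" using assms(6) by blast
  then have "S1 \<times> S1 \<union> S2 \<times> S2 \<in> gunif G" by (rule uniformity_on_mono[OF U R refines])
  then show ?thesis using assms(4-) unfolding separation_def by simp
qed

lemma equiv_Image_blocks: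
  assumes "equiv A R" "R `` X \<union> R `` Y = A"
  shows "R \<subseteq> R `` X \<times> R `` X \<union> R `` Y \<times> R `` Y"
proof (rule subrelI)
  fix y z assume yz: "(y, z) \<in> R"
  have "z \<in> R `` B" if "y \<in> R `` B" for B
    using yz that assms(1) by (blast elim: equivE dest: transD)
  moreover have "y \<in> R `` X \<union> R `` Y"
    using yz equiv_type[OF assms(1)] assms(2) by blast
  ultimately show "(y, z) \<in> R `` X \<times> R `` X \<union> R `` Y \<times> R `` Y" by blast
qed

lemma is_graph_edgeD:
  assumes "is_graph G" "e \<in> gedges G"
  shows "gsrc G e \<in> gverts G" "gtgt G e \<in> gverts G" "gbar G e \<in> gedges G"
    "gsrc G (gbar G e) = gtgt G e" "gtgt G (gbar G e) = gsrc G e"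
  using assms unfolding is_graph_def by auto

lemma is_graph_disjoint: "is_graph G \<Longrightarrow> gverts G \<inter> gedges G = {}"
  unfolding is_graph_def by blast

lemma is_subgraph_has_vertex:
  assumes "is_graph G" "is_subgraph G S" "S \<noteq> {}"
  obtains v where "v \<in> S" "v \<in> gverts G"
proof -
  obtain x where x: "x \<in> S" "x \<in> gcarrier G"
    using assms(2,3) unfolding is_subgraph_def by blast
  show ?thesis
  proof (cases "x \<in> gverts G")
    case False
    then have "x \<in> gedges G" using x(2) unfolding gcarrier_def by blast
    then show ?thesis
      using that x(1) assms(2) is_graph_edgeD[OF assms(1)] unfolding is_subgraph_def by blast
  qed (use that x in blast)
qed

lemma path_between_Cons:
  "path_between G u w (e # es) \<longleftrightarrow>
     e \<in> gedges G \<and> gsrc G e = u \<and> path_between G (gtgt G e) w es"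
proof (cases "es = []")
  case True
  then show ?thesis by (auto simp: path_between_def)
next
  case False
  have split_index: "(\<forall>i. Suc i < length (e # es) \<longrightarrow> P i) \<longleftrightarrow>
      P 0 \<and> (\<forall>i. Suc i < length es \<longrightarrow> P (Suc i))" for P
    using False by (metis Suc_less_eq gr0_conv_Suc less_Suc_eq_0_disj length_Cons length_greater_0_conv)
  with False show ?thesis by (auto simp: path_between_def hd_conv_nth)
qed

lemma path_between_closed:
  assumes "path_between G u w es" "u \<in> A"
    and "\<And>e. e \<in> gedges G \<Longrightarrow> gsrc G e \<in> A \<Longrightarrow> gtgt G e \<in> A"
  shows "w \<in> A"
  using assms(1,2)
proof (induction es arbitrary: u)
  case Nil
  then show ?case by (simp add: path_between_def)
next
  case (Cons e es)
  then show ?case using assms(3) by (auto simp: path_between_Cons)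
qed

lemma quotient_graph_simps:
  "gverts (quotient_graph G R) = gverts G // R"
  "gedges (quotient_graph G R) = gedges G // R"
  "gsrc (quotient_graph G R) = (\<lambda>C. R `` (gsrc G ` C))"
  "gtgt (quotient_graph G R) = (\<lambda>C. R `` (gtgt G ` C))"
  "gbar (quotient_graph G R) = (\<lambda>C. R `` (gbar G ` C))"
  by (simp_all add: quotient_graph_def)

lemma compatible_equivD:
  assumes "compatible_equiv G R"
  shows "equiv (gcarrier G) R" "R \<subseteq> gverts G \<times> gverts G \<union> gedges G \<times> gedges G"
    and "\<And>e e'. (e, e') \<in> R \<Longrightarrow> e \<in> gedges G \<Longrightarrow>
      (gsrc G e, gsrc G e') \<in> R \<and> (gtgt G e, gtgt G e') \<in> R \<and> (gbar G e, gbar G e') \<in> R"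
  using assms unfolding compatible_equiv_def compatible_rel_def by auto

lemma Image_image_equiv_class:
  assumes "equiv A R" "x \<in> A" "\<And>y. (x, y) \<in> R \<Longrightarrow> (f x, f y) \<in> R"
  shows "R `` (f ` (R `` {x})) = R `` {f x}"
proof
  show "R `` {f x} \<subseteq> R `` (f ` (R `` {x}))"
    using equiv_class_self[OF assms(1,2)] by blast
  show "R `` (f ` (R `` {x})) \<subseteq> R `` {f x}"
    using assms(1,3) by (auto elim!: equivE dest: transD)
qed

lemma quotient_graph_edge_class:
  assumes "compatible_equiv G R" "e \<in> gedges G"
  shows "R `` {e} \<in> gedges (quotient_graph G R)"
    "gsrc (quotient_graph G R) (R `` {e}) = R `` {gsrc G e}"
    "gtgt (quotient_graph G R) (R `` {e}) = R `` {gtgt G e}"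
    "gbar (quotient_graph G R) (R `` {e}) = R `` {gbar G e}"
proof -
  note equiv = compatible_equivD(1)[OF assms(1)] and compat = compatible_equivD(3)[OF assms(1)]
  have e: "e \<in> gcarrier G" using assms(2) unfolding gcarrier_def by blast
  show "R `` {e} \<in> gedges (quotient_graph G R)"
    using assms(2) by (simp add: quotient_graph_simps quotientI)
  show "gsrc (quotient_graph G R) (R `` {e}) = R `` {gsrc G e}"
    "gtgt (quotient_graph G R) (R `` {e}) = R `` {gtgt G e}"
    "gbar (quotient_graph G R) (R `` {e}) = R `` {gbar G e}"
    unfolding quotient_graph_simps
    using Image_image_equiv_class[OF equiv e] compat assms(2) by simp_all
qed

definition full_subgraph :: "('a, 'm) graph_scheme \<Rightarrow> 'a set \<Rightarrow> 'a set" where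
  "full_subgraph G A = (gverts G \<inter> A) \<union> {e \<in> gedges G. gsrc G e \<in> A}"

lemma is_subgraph_full_subgraph:
  assumes G: "is_graph G" and closed: "\<And>e. e \<in> gedges G \<Longrightarrow> gsrc G e \<in> A \<longleftrightarrow> gtgt G e \<in> A"
  shows "is_subgraph G (full_subgraph G A)"
  unfolding is_subgraph_def
proof (intro conjI ballI)
  show "full_subgraph G A \<subseteq> gcarrier G"
    unfolding full_subgraph_def gcarrier_def by blast
  fix e assume e: "e \<in> full_subgraph G A \<inter> gedges G"
  then have "e \<in> gedges G" "gsrc G e \<in> A"
    using is_graph_disjoint[OF G] unfolding full_subgraph_def by blast+
  then show "gsrc G e \<in> full_subgraph G A" "gtgt G e \<in> full_subgraph G A"
    "gbar G e \<in> full_subgraph G A"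
    using closed is_graph_edgeD[OF G] unfolding full_subgraph_def by auto
qed

lemma full_subgraph_partition:
  assumes "is_graph G"
  shows "full_subgraph G A \<union> full_subgraph G (- A) = gcarrier G"
    "full_subgraph G A \<inter> full_subgraph G (- A) = {}"
  using is_graph_disjoint[OF assms] unfolding full_subgraph_def gcarrier_def by auto

lemma full_subgraph_blocks:
  assumes G: "is_graph G" and R: "compatible_equiv G R"
    and saturated: "\<And>v w. (v, w) \<in> R \<Longrightarrow> v \<in> A \<longleftrightarrow> w \<in> A"
  shows "R \<subseteq> full_subgraph G A \<times> full_subgraph G A \<union> full_subgraph G (- A) \<times> full_subgraph G (- A)"
proof (rule subrelI)
  fix x y assume xy: "(x, y) \<in> R"
  have "x \<in> full_subgraph G A \<longleftrightarrow> y \<in> full_subgraph G A"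
  proof (cases "x \<in> gedges G")
    case True
    then have "(gsrc G x, gsrc G y) \<in> R" using compatible_equivD(3)[OF R xy] by blast
    moreover have "y \<in> gedges G" "x \<notin> gverts G" "y \<notin> gverts G"
      using True xy compatible_equivD(2)[OF R] is_graph_disjoint[OF G] by blast+
    ultimately show ?thesis using True saturated unfolding full_subgraph_def by auto
  next
    case False
    then have "x \<in> gverts G" "y \<in> gverts G" "y \<notin> gedges G"
      using xy compatible_equivD(2)[OF R] is_graph_disjoint[OF G] by blast+
    then show ?thesis using False saturated[OF xy] unfolding full_subgraph_def by auto
  qed
  moreover have "x \<in> gcarrier G" "y \<in> gcarrier G"
    using xy equiv_type[OF compatible_equivD(1)[OF R]] by blast+
  ultimately show "(x, y) \<in> full_subgraph G A \<times> full_subgraph G A \<union> full_subgraph G (- A) \<times> full_subgraph G (- A)"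
    using full_subgraph_partition(1)[OF G, of A] by blast
qed

lemma is_subgraph_Image:
  assumes H: "is_graph H" and R: "compatible_equiv H R" and B: "is_subgraph H B"
  shows "is_subgraph H (R `` B)"
  unfolding is_subgraph_def
proof (intro conjI ballI)
  show "R `` B \<subseteq> gcarrier H"
    using equiv_type[OF compatible_equivD(1)[OF R]] by blast
  fix y assume y: "y \<in> R `` B \<inter> gedges H"
  then obtain b where b: "b \<in> B" "(b, y) \<in> R" by blast
  then have "b \<in> gedges H"
    using y compatible_equivD(2)[OF R] is_graph_disjoint[OF H] by blast
  then have "gsrc H b \<in> B" "gtgt H b \<in> B" "gbar H b \<in> B"
    and "(gsrc H b, gsrc H y) \<in> R" "(gtgt H b, gtgt H y) \<in> R" "(gbar H b, gbar H y) \<in> R"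
    using B b compatible_equivD(3)[OF R b(2)] unfolding is_subgraph_def by blast+
  then show "gsrc H y \<in> R `` B" "gtgt H y \<in> R `` B" "gbar H y \<in> R `` B"
    by blast+
qed

lemma cofinite_graphD:
  assumes "cofinite_graph G"
  shows "is_graph G" "uniformity_on (gcarrier G) (gunif G)"
    and "\<And>W. W \<in> gunif G \<Longrightarrow> \<exists>R. compatible_equiv G R \<and> cofinite_entourage G R \<and> R \<subseteq> W"
  using assms unfolding cofinite_graph_def by simp_all

lemma separation_imp_not_cofinitely_connected:
  assumes G: "cofinite_graph G" and sep: "separation G S1 S2"
  shows "\<not> cofinitely_connected G"
proof
  assume connected: "cofinitely_connected G"
  have S: "is_subgraph G S1" "is_subgraph G S2" "S1 \<union> S2 = gcarrier G" "S1 \<inter> S2 = {}"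
    "S1 \<noteq> {}" "S2 \<noteq> {}" "S1 \<times> S1 \<union> S2 \<times> S2 \<in> gunif G"
    using sep unfolding separation_def by simp_all
  note graph = cofinite_graphD(1)[OF G]
  obtain R where R: "compatible_equiv G R" "cofinite_entourage G R"
    and R_blocks: "R \<subseteq> S1 \<times> S1 \<union> S2 \<times> S2"
    using cofinite_graphD(3)[OF G S(7)] by blast
  note equiv = compatible_equivD(1)[OF R(1)]
  let ?Q = "quotient_graph G R"
  have class_in_S1: "R `` {x} \<subseteq> S1" if "x \<in> S1" for x
    using that R_blocks S(4) by blast
  obtain v1 where v1: "v1 \<in> S1" "v1 \<in> gverts G"
    using is_subgraph_has_vertex[OF graph S(1,5)] .
  obtain v2 where v2: "v2 \<in> S2" "v2 \<in> gverts G"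
    using is_subgraph_has_vertex[OF graph S(2,6)] .
  have "R `` {v1} \<in> gverts ?Q" "R `` {v2} \<in> gverts ?Q"
    using v1 v2 by (simp_all add: quotient_graph_simps quotientI)
  then obtain es where "path_between ?Q (R `` {v1}) (R `` {v2}) es"
    using connected R unfolding cofinitely_connected_def path_connected_graph_def by blast
  moreover have "gtgt ?Q D \<subseteq> S1" if D: "D \<in> gedges ?Q" "gsrc ?Q D \<subseteq> S1" for D
  proof -
    obtain e where e: "e \<in> gedges G" "D = R `` {e}"
      using D(1) unfolding quotient_graph_simps by (auto elim: quotientE)
    have "gsrc G e \<in> gcarrier G"
      using is_graph_edgeD(1)[OF graph e(1)] unfolding gcarrier_def by blast
    then have "gsrc G e \<in> S1"
      using D(2) equiv_class_self[OF equiv] quotient_graph_edge_class(2)[OF R(1) e(1)] e(2) by auto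
    then have "e \<notin> S2" using S(2,4) e(1) unfolding is_subgraph_def by blast
    then have "gtgt G e \<in> S1" using S(1,3) e(1) unfolding is_subgraph_def gcarrier_def by blast
    then show ?thesis
      using class_in_S1 quotient_graph_edge_class(3)[OF R(1) e(1)] e(2) by simp
  qed
  ultimately have "R `` {v2} \<subseteq> S1"
    using path_between_closed[where A = "{C. C \<subseteq> S1}"] class_in_S1[OF v1(1)] by blast
  moreover have "v2 \<in> R `` {v2}"
    using equiv_class_self[OF equiv] v2(2) unfolding gcarrier_def by blast
  ultimately show False using v2(1) S(4) by blast
qed

lemma not_cofinitely_connected_imp_separation:
  assumes G: "cofinite_graph G" and "\<not> cofinitely_connected G"
  obtains S1 S2 where "separation G S1 S2"
proof -
  note graph = cofinite_graphD(1)[OF G] and U = cofinite_graphD(2)[OF G]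
  obtain R where R: "compatible_equiv G R" "cofinite_entourage G R"
    and disconnected: "\<not> path_connected_graph (quotient_graph G R)"
    using assms(2) unfolding cofinitely_connected_def by blast
  note equiv = compatible_equivD(1)[OF R(1)]
  let ?Q = "quotient_graph G R"
  obtain u w where "u \<in> gverts ?Q" "w \<in> gverts ?Q" and no_path: "\<nexists>es. path_between ?Q u w es"
    using disconnected unfolding path_connected_graph_def by blast
  then obtain v v' where v: "v \<in> gverts G" "u = R `` {v}" and v': "v' \<in> gverts G" "w = R `` {v'}"
    unfolding quotient_graph_simps by (auto elim!: quotientE)
  define A where "A = {x. \<exists>es. path_between ?Q (R `` {x}) w es}"
  have extend: "gsrc G e \<in> A" if e: "e \<in> gedges G" "gtgt G e \<in> A" for e
  proof -
    obtain es where "path_between ?Q (R `` {gtgt G e}) w es"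
      using e(2) unfolding A_def by blast
    then have "path_between ?Q (R `` {gsrc G e}) w (R `` {e} # es)"
      using quotient_graph_edge_class[OF R(1) e(1)] by (simp add: path_between_Cons)
    then show ?thesis unfolding A_def by blast
  qed
  have closed: "gsrc G e \<in> A \<longleftrightarrow> gtgt G e \<in> A" if e: "e \<in> gedges G" for e
    using extend[OF e] extend[of "gbar G e"] is_graph_edgeD[OF graph e] by auto
  have saturated: "x \<in> A \<longleftrightarrow> y \<in> A" if "(x, y) \<in> R" for x y
    using equiv_class_eq[OF equiv that] unfolding A_def by simp
  have "v' \<in> A" unfolding A_def v'(2) path_between_def by blast
  then have "full_subgraph G A \<noteq> {}" using v'(1) unfolding full_subgraph_def by blast
  moreover have "v \<notin> A" using no_path unfolding A_def v(2) by blast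
  then have "full_subgraph G (- A) \<noteq> {}" using v(1) unfolding full_subgraph_def by blast
  ultimately have "separation G (full_subgraph G A) (full_subgraph G (- A))"
    using separation_if_refines[OF U _ full_subgraph_blocks[OF graph R(1) saturated]]
      is_subgraph_full_subgraph[OF graph] closed full_subgraph_partition[OF graph] R(2)
    unfolding cofinite_entourage_def by auto
  then show thesis ..
qed

lemma cofinitely_connected_iff_no_separation:
  assumes "cofinite_graph G"
  shows "cofinitely_connected G \<longleftrightarrow> (\<nexists>S1 S2. separation G S1 S2)"
  using separation_imp_not_cofinitely_connected[OF assms]
    not_cofinitely_connected_imp_separation[OF assms] by blast

definition graph_morphism ::
    "('a, 'm) graph_scheme \<Rightarrow> ('b, 'n) graph_scheme \<Rightarrow> ('a \<Rightarrow> 'b) \<Rightarrow> bool" where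
  "graph_morphism G H \<phi> \<longleftrightarrow> \<phi> ` gverts G \<subseteq> gverts H \<and> \<phi> ` gedges G \<subseteq> gedges H \<and>
     (\<forall>e\<in>gedges G. \<phi> (gsrc G e) = gsrc H (\<phi> e) \<and> \<phi> (gtgt G e) = gtgt H (\<phi> e) \<and>
        \<phi> (gbar G e) = gbar H (\<phi> e))"

lemma graph_morphism_carrier: "graph_morphism G H \<phi> \<Longrightarrow> \<phi> ` gcarrier G \<subseteq> gcarrier H"
  unfolding graph_morphism_def gcarrier_def by blast

lemma is_subgraph_image:
  assumes H: "is_graph H" and \<phi>: "graph_morphism G H \<phi>" and S: "is_subgraph G S"
  shows "is_subgraph H (\<phi> ` S)"
  unfolding is_subgraph_def
proof (intro conjI ballI)
  show "\<phi> ` S \<subseteq> gcarrier H"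
    using S graph_morphism_carrier[OF \<phi>] unfolding is_subgraph_def by blast
  fix y assume y: "y \<in> \<phi> ` S \<inter> gedges H"
  then obtain x where x: "x \<in> S" "y = \<phi> x" by blast
  have "x \<notin> gverts G"
    using x y \<phi> is_graph_disjoint[OF H] unfolding graph_morphism_def by blast
  then have "x \<in> gedges G"
    using x S unfolding is_subgraph_def gcarrier_def by blast
  then show "gsrc H y \<in> \<phi> ` S" "gtgt H y \<in> \<phi> ` S" "gbar H y \<in> \<phi> ` S"
    using x S \<phi> unfolding is_subgraph_def graph_morphism_def by (metis IntI image_eqI)+
qed

lemma is_subgraph_vimage:
  assumes G: "is_graph G" and \<phi>: "graph_morphism G H \<phi>" and T: "is_subgraph H T"
  shows "is_subgraph G {x \<in> gcarrier G. \<phi> x \<in> T}"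
  unfolding is_subgraph_def
proof (intro conjI ballI)
  fix e assume "e \<in> {x \<in> gcarrier G. \<phi> x \<in> T} \<inter> gedges G"
  then have e: "e \<in> gedges G" "\<phi> e \<in> T" by blast+
  then have "\<phi> (gsrc G e) \<in> T" "\<phi> (gtgt G e) \<in> T" "\<phi> (gbar G e) \<in> T"
    using T \<phi> unfolding is_subgraph_def graph_morphism_def by (metis IntI image_subset_iff)+
  moreover have "gsrc G e \<in> gcarrier G" "gtgt G e \<in> gcarrier G" "gbar G e \<in> gcarrier G"
    using is_graph_edgeD[OF G e(1)] unfolding gcarrier_def by blast+
  ultimately show "gsrc G e \<in> {x \<in> gcarrier G. \<phi> x \<in> T}" "gtgt G e \<in> {x \<in> gcarrier G. \<phi> x \<in> T}"
    "gbar G e \<in> {x \<in> gcarrier G. \<phi> x \<in> T}"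
    by blast+
qed blast

lemma completion_graph_morphism: "is_completion G H \<phi> \<Longrightarrow> graph_morphism G H \<phi>"
  unfolding is_completion_def graph_morphism_def by simp

lemma is_completionD:
  assumes "is_completion G H \<phi>"
  shows "cofinite_graph H"
    and "gunif G = {map_prod \<phi> \<phi> -` W \<inter> (gcarrier G \<times> gcarrier G) | W. W \<in> gunif H}"
    and "\<And>y W. y \<in> gcarrier H \<Longrightarrow> W \<in> gunif H \<Longrightarrow> \<exists>x\<in>gcarrier G. (y, \<phi> x) \<in> W"
  using assms unfolding is_completion_def by simp_all

lemma separation_vimage_completion:
  assumes G: "is_graph G" and \<phi>: "is_completion G H \<phi>" and sep: "separation H T1 T2"
  shows "separation G {x \<in> gcarrier G. \<phi> x \<in> T1} {x \<in> gcarrier G. \<phi> x \<in> T2}"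
proof -
  let ?S1 = "{x \<in> gcarrier G. \<phi> x \<in> T1}" and ?S2 = "{x \<in> gcarrier G. \<phi> x \<in> T2}"
  have T: "is_subgraph H T1" "is_subgraph H T2" "T1 \<union> T2 = gcarrier H" "T1 \<inter> T2 = {}"
    "T1 \<noteq> {}" "T2 \<noteq> {}" "T1 \<times> T1 \<union> T2 \<times> T2 \<in> gunif H"
    using sep unfolding separation_def by simp_all
  note morph = completion_graph_morphism[OF \<phi>]
  have "?S1 \<times> ?S1 \<union> ?S2 \<times> ?S2 =
      map_prod \<phi> \<phi> -` (T1 \<times> T1 \<union> T2 \<times> T2) \<inter> (gcarrier G \<times> gcarrier G)"
    by auto
  then have "?S1 \<times> ?S1 \<union> ?S2 \<times> ?S2 \<in> gunif G"
    using is_completionD(2)[OF \<phi>] T(7) by blast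
  moreover have "{x \<in> gcarrier G. \<phi> x \<in> T} \<noteq> {}" if part: "T = T1 \<or> T = T2" for T
  proof -
    obtain y where y: "y \<in> T" using part T(5,6) by blast
    then obtain x where "x \<in> gcarrier G" "(y, \<phi> x) \<in> T1 \<times> T1 \<union> T2 \<times> T2"
      using is_completionD(3)[OF \<phi> _ T(7)] part T(3) by blast
    then show ?thesis using y part T(4) by blast
  qed
  moreover have "?S1 \<union> ?S2 = gcarrier G"
    using graph_morphism_carrier[OF morph] T(3) by blast
  ultimately show ?thesis
    using is_subgraph_vimage[OF G morph T(1)] is_subgraph_vimage[OF G morph T(2)] T(4)
    unfolding separation_def by blast
qed

lemma separation_image_completion:
  assumes \<phi>: "is_completion G H \<phi>" and sep: "separation G S1 S2"
  obtains T1 T2 where "separation H T1 T2"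
proof -
  have S: "is_subgraph G S1" "is_subgraph G S2" "S1 \<union> S2 = gcarrier G" "S1 \<inter> S2 = {}"
    "S1 \<noteq> {}" "S2 \<noteq> {}" "S1 \<times> S1 \<union> S2 \<times> S2 \<in> gunif G"
    using sep unfolding separation_def by simp_all
  note H = is_completionD(1)[OF \<phi>] and morph = completion_graph_morphism[OF \<phi>]
  note graph = cofinite_graphD(1)[OF H] and U = cofinite_graphD(2)[OF H]
  have "S1 \<times> S1 \<union> S2 \<times> S2 \<in> {map_prod \<phi> \<phi> -` W \<inter> (gcarrier G \<times> gcarrier G) | W. W \<in> gunif H}"
    using S(7) is_completionD(2)[OF \<phi>] by simp
  then obtain W where W: "W \<in> gunif H"
    and blocks: "S1 \<times> S1 \<union> S2 \<times> S2 = map_prod \<phi> \<phi> -` W \<inter> (gcarrier G \<times> gcarrier G)"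
    by blast
  obtain R where R: "compatible_equiv H R" "cofinite_entourage H R" "R \<subseteq> W"
    using cofinite_graphD(3)[OF H W] by blast
  note equiv = compatible_equivD(1)[OF R(1)]
  have R_entourage: "R \<in> gunif H" using R(2) unfolding cofinite_entourage_def by blast
  define T where "T S = R `` (\<phi> ` S)" for S
  have cover: "T S1 \<union> T S2 = gcarrier H"
  proof
    show "T S1 \<union> T S2 \<subseteq> gcarrier H"
      unfolding T_def using equiv_type[OF equiv] by blast
    show "gcarrier H \<subseteq> T S1 \<union> T S2"
    proof
      fix y assume "y \<in> gcarrier H"
      then obtain x where "x \<in> gcarrier G" "(y, \<phi> x) \<in> R"
        using is_completionD(3)[OF \<phi> _ R_entourage] by blast
      then show "y \<in> T S1 \<union> T S2"
        using S(3) equiv unfolding T_def by (blast elim: equivE dest: symD)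
    qed
  qed
  have disjoint: "T S1 \<inter> T S2 = {}"
  proof (rule equals0I)
    \<comment> \<open>\<open>S\<^sub>1 \<times> S\<^sub>1 \<union> S\<^sub>2 \<times> S\<^sub>2\<close> is the trace of \<open>W \<supseteq> R\<close>, so \<open>R\<close> never relates \<open>\<phi>(S\<^sub>1)\<close> to \<open>\<phi>(S\<^sub>2)\<close>.\<close>
    fix y assume "y \<in> T S1 \<inter> T S2"
    then obtain x1 x2 where x: "x1 \<in> S1" "x2 \<in> S2" "(\<phi> x1, y) \<in> R" "(\<phi> x2, y) \<in> R"
      unfolding T_def by blast
    then have "(\<phi> x1, \<phi> x2) \<in> R"
      using equiv by (blast elim: equivE dest: symD transD)
    then have "(x1, x2) \<in> S1 \<times> S1 \<union> S2 \<times> S2"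
      using blocks R(3) x(1,2) S(3) by auto
    then show False using x(1,2) S(4) by blast
  qed
  have nonempty: "T S \<noteq> {}" if "S \<noteq> {}" "S \<subseteq> gcarrier G" for S
    using that graph_morphism_carrier[OF morph] equiv_class_self[OF equiv] unfolding T_def by blast
  have subgraph: "is_subgraph H (T S)" if "is_subgraph G S" for S
    unfolding T_def using is_subgraph_Image[OF graph R(1) is_subgraph_image[OF graph morph that]] .
  have "S1 \<subseteq> gcarrier G" "S2 \<subseteq> gcarrier G" using S(3) by blast+
  then have "separation H (T S1) (T S2)"
    using separation_if_refines[OF U R_entourage equiv_Image_blocks[OF equiv cover[unfolded T_def]]]
      subgraph[OF S(1)] subgraph[OF S(2)] cover disjoint nonempty[OF S(5)] nonempty[OF S(6)]
    unfolding T_def by simp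
  then show thesis ..
qed

theorem mainTheorem1:
  fixes G :: "'a ugraph" and H :: "'b ugraph" and \<phi> :: "'a \<Rightarrow> 'b"
  assumes "cofinite_graph G"
    and "is_completion G H \<phi>"
  shows "(cofinitely_connected G \<longleftrightarrow>
            \<not> (\<exists>S1 S2. S1 \<noteq> {} \<and> S2 \<noteq> {} \<and> uniform_sum G S1 S2))
       \<and> (cofinitely_connected G \<longleftrightarrow> cofinitely_connected H)"
proof -
  note H = is_completionD(1)[OF assms(2)]
  have "(\<exists>S1 S2. S1 \<noteq> {} \<and> S2 \<noteq> {} \<and> uniform_sum G S1 S2) \<longleftrightarrow> (\<exists>S1 S2. separation G S1 S2)"
    using nonempty_uniform_sum_iff_separation[OF cofinite_graphD(2)[OF assms(1)]] by simp
  moreover have "(\<exists>S1 S2. separation G S1 S2) \<longleftrightarrow> (\<exists>T1 T2. separation H T1 T2)"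
    using separation_image_completion[OF assms(2)]
      separation_vimage_completion[OF cofinite_graphD(1)[OF assms(1)] assms(2)] by meson
  ultimately show ?thesis
    using cofinitely_connected_iff_no_separation[OF assms(1)]
      cofinitely_connected_iff_no_separation[OF H] by simp
qed

end
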